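(* The Diophantine equation $64 x^6 - 1 = p^3 q^3 y^2$ has no solution with integers $x, y$ and primes $p, q$. *)

theory Defs
  imports "HOL-Computational_Algebra.Primes"
begin

end

theory Submission
  imports Defs "HOL-Computational_Algebra.Nth_Powers"
begin

text \<open>
  For \<open>\<bar>x\<bar> \<le> 1\<close> there is nothing to do. Otherwise, with \<open>t = 2 \<bar>x\<bar>\<close>, the equation
  reads \<open>(t^3 - 1)(t^3 + 1) = p^3 q^3 y^2\<close>, and the two factors are odd and coprime, so each
  of \<open>p\<close>, \<open>q\<close> divides only one of them; a factor divisible by neither prime is a square.
  If both primes divide \<open>t^3 + 1\<close>, then \<open>t^3 - 1\<close> is a square, impossible modulo 4. If both
  divide \<open>t^3 - 1\<close>, then \<open>t^3 + 1\<close> is a square, and Euler's theorem on \<open>t^3 + 1 = v^2\<close>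
  gives \<open>t = 2\<close>. If the primes are split, the factorizations \<open>t^3 \<mp> 1 = (t \<mp> 1)(t^2 \<pm> t + 1)\<close>
  into factors whose gcd divides 3 make \<open>t - 1\<close> or \<open>t + 1\<close> a square; residues modulo 3 and 4
  leave only \<open>t = r^2 + 1\<close> with \<open>r \<equiv> 1 (mod 3)\<close>, and then
  \<open>t^2 - t + 1 = (r^2 + r + 1)(r^2 - r + 1)\<close> produces \<open>r^2 + 2 = 3a^2\<close> and
  \<open>r^2 + r + 1 = 3b^2\<close>, which force \<open>r = 1\<close>.

  In Euler's theorem the case \<open>3 dvd t + 1\<close> reduces to \<open>3a^4 - 3a^2 + 1 = b^2\<close>, whose solutions
  with \<open>a \<noteq> 0\<close> have \<open>a^2 = 1\<close> by a descent alternating between the quartic forms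
  \<open>m^4 - 3m^2n^2 + 3n^4\<close> and \<open>m^4 + 6m^2n^2 - 3n^4\<close>.
\<close>

section \<open>Squares and coprime factors\<close>

lemma coprime_of_lincomb:
  fixes a b m u v :: int
  assumes "a * u + b * v = m" "coprime a m"
  shows "coprime a b"
proof (rule coprimeI)
  fix c assume c: "c dvd a" "c dvd b"
  then have "c dvd m" using assms(1) by (metis dvd_add dvd_mult2)
  then show "is_unit c" using c(1) assms(2) coprime_common_divisor by blast
qed

lemma coprime_primeI:
  fixes a b :: int
  assumes "\<And>p. prime p \<Longrightarrow> p dvd a \<Longrightarrow> p dvd b \<Longrightarrow> False"
  shows "coprime a b"
proof (rule coprimeI)
  fix c assume c: "c dvd a" "c dvd b"
  show "is_unit c"
  proof (rule ccontr)
    assume "\<not> is_unit c"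
    then obtain p where "prime p" "p dvd c" using prime_factor_int by force
    then show False using assms c by (meson dvd_trans)
  qed
qed

lemma coprime_mult_eq_power_int:
  fixes a b c :: int
  assumes "a > 0" "b > 0" "coprime a b" "a * b = c ^ k"
  shows "\<exists>u. a = u ^ k"
proof -
  have "coprime (nat a) (nat b)" using assms by (simp add: coprime_int_iff [symmetric])
  moreover have "nat a * nat b = nat \<bar>c\<bar> ^ k"
    using assms by (metis abs_of_pos mult_pos_pos nat_mult_distrib nat_power_eq power_abs abs_ge_zero)
  ultimately have "is_nth_power k (nat a)"
    using is_nth_power_mult_coprime_natD(1) assms(1,2) by (metis is_nth_power_nth_power zero_less_nat_eq)
  then obtain z where "nat a = z ^ k" by (auto elim: is_nth_powerE)
  then have "a = int z ^ k" using assms(1) by (metis int_nat_eq of_nat_power less_imp_le)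
  then show ?thesis by blast
qed

lemma coprime_factor_square:
  fixes a b c y :: int
  assumes "a > 0" "coprime a b" "coprime a c" "a * b = c * y^2"
  shows "\<exists>u. a = u^2"
proof -
  have "a dvd y^2" using assms(3,4) by (metis coprime_dvd_mult_right_iff dvd_triv_left)
  then obtain k where k: "y^2 = a * k" by (auto elim: dvdE)
  then have "b = c * k" using assms(1,4) by (simp add: algebra_simps)
  then have "coprime a k" using assms(2) by simp
  show ?thesis
  proof (cases "k > 0")
    case True
    then show ?thesis using coprime_mult_eq_power_int[OF assms(1) True \<open>coprime a k\<close>] k by metis
  next
    case False
    have "k \<ge> 0" using k assms(1) by (metis zero_le_power2 zero_le_mult_iff not_less)
    then have "is_unit a" using False \<open>coprime a k\<close> by simp
    then show ?thesis using assms(1) by (intro exI[of _ 1]) simp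
  qed
qed

lemma coprime_factor_square_prime_cubes:
  fixes a b p q y :: int
  assumes "a * b = p^3 * q^3 * y^2" "a > 0" "coprime a b"
    and "prime p" "prime q" "\<not> p dvd a" "\<not> q dvd a"
  shows "\<exists>u. a = u^2"
proof -
  have "coprime a (p^3 * q^3)"
    using prime_imp_power_coprime[OF assms(4,6), of 3] prime_imp_power_coprime[OF assms(5,7), of 3] by simp
  then show ?thesis using coprime_factor_square assms(1-3) by blast
qed

lemma no_square_between:
  fixes n z :: int
  assumes "n \<ge> 0" "n^2 < z^2" "z^2 < (n + 1)^2"
  shows False
proof -
  have "n^2 < \<bar>z\<bar>^2" using assms(2) by simp
  then have "n < \<bar>z\<bar>" by (rule power_less_imp_less_base) simp
  moreover have "\<bar>z\<bar>^2 < (n + 1)^2" using assms(3) by simp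
  then have "\<bar>z\<bar> < n + 1" by (rule power_less_imp_less_base) (use assms(1) in simp)
  ultimately show False by linarith
qed

lemma square_cases:
  fixes m :: int
  shows "m^2 = 0 \<or> m^2 = 1 \<or> m^2 \<ge> 4"
proof -
  consider "\<bar>m\<bar> = 0" | "\<bar>m\<bar> = 1" | "\<bar>m\<bar> \<ge> 2" by linarith
  then show ?thesis
  proof cases
    case 3
    then have "2^2 \<le> \<bar>m\<bar>^2" by (intro power_mono) auto
    then show ?thesis by simp
  qed (use power2_abs[of m] in auto)
qed

lemma square_mod_3:
  fixes x :: int
  shows "x^2 mod 3 = (if 3 dvd x then 0 else 1)"
proof -
  have "x mod 3 = 0 \<or> x mod 3 = 1 \<or> x mod 3 = 2" by linarith
  then have "(x mod 3)^2 mod 3 = (if x mod 3 = 0 then 0 else 1)" by auto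
  then show ?thesis by (simp add: power_mod dvd_eq_mod_eq_0)
qed

lemma square_mod_4:
  fixes x :: int
  shows "x^2 mod 4 = 0 \<or> x^2 mod 4 = 1"
proof -
  have "x mod 4 = 0 \<or> x mod 4 = 1 \<or> x mod 4 = 2 \<or> x mod 4 = 3" by linarith
  then have "(x mod 4)^2 mod 4 = 0 \<or> (x mod 4)^2 mod 4 = 1" by auto
  then show ?thesis by (simp add: power_mod)
qed

lemma square_eq_square_minus_self_plus_one:
  fixes n v :: int
  assumes "n^2 - n + 1 = v^2"
  shows "n = 0 \<or> n = 1"
proof (rule ccontr)
  assume "\<not> (n = 0 \<or> n = 1)"
  then consider "n \<ge> 2" | "n \<le> -1" by linarith
  then show False
  proof cases
    case 1
    then show False using no_square_between[of "n - 1" v] assms by (simp add: power2_eq_square algebra_simps)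
  next
    case 2
    then show False using no_square_between[of "- n" v] assms by (simp add: power2_eq_square algebra_simps)
  qed
qed

section \<open>A descent for two quartic forms\<close>

definition quartic_P :: "int \<Rightarrow> int \<Rightarrow> int" where
  "quartic_P m n = m^4 - 3 * m^2 * n^2 + 3 * n^4"

definition quartic_Q :: "int \<Rightarrow> int \<Rightarrow> int" where
  "quartic_Q m n = m^4 + 6 * m^2 * n^2 - 3 * n^4"

lemma power4_eq_square_square:
  fixes m :: int
  shows "m^4 = (m^2)^2"
  by (simp flip: power_mult)

lemma square_quartic_P_one_right:
  fixes m N :: int
  assumes "N^2 = quartic_P m 1"
  shows "m^2 = 1"
proof -
  define x where "x = m^2"
  have N: "N^2 = x^2 - 3 * x + 3"
    using assms unfolding quartic_P_def power4_eq_square_square x_def[symmetric] by simp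
  consider "x = 0" | "x = 1" | "x \<ge> 4" using square_cases[of m] x_def by auto
  then show ?thesis
  proof cases
    case 1
    then show ?thesis using N square_cases[of N] by auto
  next
    case 3
    then have False
      using no_square_between[of "x - 2" N] N by (simp add: power2_eq_square algebra_simps)
    then show ?thesis ..
  qed (simp add: x_def)
qed

lemma square_quartic_Q_one_right:
  fixes r W :: int
  assumes "W^2 = quartic_Q r 1"
  shows "r^2 = 1"
proof -
  define x where "x = r^2"
  have W: "W^2 = x^2 + 6 * x - 3"
    using assms unfolding quartic_Q_def power4_eq_square_square x_def[symmetric] by simp
  consider "x = 0" | "x = 1" | "x \<ge> 4" using square_cases[of r] x_def by auto
  then show ?thesis
  proof cases
    case 1
    then have "W^2 < 0" using W by simp
    then show ?thesis by simp
  next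
    case 3
    then have False
      using no_square_between[of "x + 2" W] W by (simp add: power2_eq_square algebra_simps)
    then show ?thesis ..
  qed (simp add: x_def)
qed

lemma square_quartic_Q_one_left:
  fixes s W :: int
  assumes "W^2 = quartic_Q 1 s" "s \<noteq> 0"
  shows "s^2 = 1"
proof -
  define x where "x = s^2"
  have W: "W^2 = 1 + 6 * x - 3 * x^2"
    using assms unfolding quartic_Q_def power4_eq_square_square x_def[symmetric] by simp
  have "x = 1 \<or> x \<ge> 4" using square_cases[of s] x_def assms(2) by auto
  moreover have "x \<ge> 4 \<Longrightarrow> 4 * x \<le> x^2" by (simp add: power2_eq_square)
  moreover have "0 \<le> W^2" by simp
  ultimately show ?thesis using W x_def by linarith
qed

lemma not_three_dvd_if_square_eq:
  fixes N m n c d :: int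
  assumes "coprime m n" "N^2 = m^2 * c + 3 * d * n^4" "\<not> 3 dvd d"
  shows "\<not> 3 dvd m"
proof
  assume "3 dvd m"
  have p3: "prime (3::int)" by simp
  have "9 dvd m^2 * c" using \<open>3 dvd m\<close> by (auto simp: power2_eq_square)
  then have "3 dvd N^2" unfolding assms(2) by (intro dvd_add) (auto dest: dvd_mult_left)
  then have "3 dvd N" using p3 by (simp add: prime_dvd_power_iff)
  then have "9 dvd N^2" by (auto simp: power2_eq_square)
  with \<open>9 dvd m^2 * c\<close> have "9 dvd 3 * (d * n^4)"
    unfolding assms(2) by (simp add: dvd_add_right_iff mult.assoc)
  then have "3 dvd d * n^4" using dvd_mult_cancel_left[of 3 3 "d * n^4"] by simp
  then have "3 dvd n" using assms(3) p3 by (simp add: prime_dvd_mult_iff prime_dvd_power_iff)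
  with \<open>3 dvd m\<close> have "is_unit (3::int)" using assms(1) coprime_common_divisor by blast
  then show False by simp
qed

lemma not_three_dvd_if_square_quartic_P:
  fixes m n N :: int
  assumes "coprime m n" "N^2 = quartic_P m n"
  shows "\<not> 3 dvd m"
  using not_three_dvd_if_square_eq[OF assms(1), of N "m^2 - 3 * n^2" 1] assms(2)
  by (simp add: quartic_P_def algebra_simps power2_eq_square power4_eq_xxxx)

lemma not_three_dvd_if_square_quartic_Q:
  fixes m n N :: int
  assumes "coprime m n" "N^2 = quartic_Q m n"
  shows "\<not> 3 dvd m"
  using not_three_dvd_if_square_eq[OF assms(1), of N "m^2 + 6 * n^2" "-1"] assms(2)
  by (simp add: quartic_Q_def algebra_simps power2_eq_square power4_eq_xxxx)

lemma coprime_if_mult_eq_3_fourth_power: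
  fixes a b w M u v k :: int
  assumes "a * b = 3 * w^4" "M^2 = u * a + v * b + 3 * k * w^2" "coprime M w" "\<not> 3 dvd M"
  shows "coprime a b"
proof (rule coprime_primeI)
  fix p :: int
  assume p: "prime p" "p dvd a" "p dvd b"
  then have "p dvd 3 * w^4" unfolding assms(1)[symmetric] by simp
  then have "p dvd 3 \<or> p dvd w" using p(1) by (simp add: prime_dvd_mult_iff prime_dvd_power_iff)
  then show False
  proof
    assume "p dvd 3"
    then have "p = 3" using p(1) by (simp add: primes_dvd_imp_eq)
    then have "p dvd M^2" unfolding assms(2) using p by simp
    then show False using \<open>p = 3\<close> assms(4) by (simp add: prime_dvd_power_iff)
  next
    assume "p dvd w"
    then have "p dvd M^2" unfolding assms(2) using p by (simp add: power2_eq_square)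
    then have "p dvd M" using p(1) by (simp add: prime_dvd_power_iff)
    then show False using \<open>p dvd w\<close> assms(3) p(1) by (meson coprime_common_divisor not_prime_unit)
  qed
qed

lemma coprime_factors_of_3_fourth_power:
  fixes a b w :: int
  assumes "a > 0" "b > 0" "coprime a b" "a * b = 3 * w^4"
  shows "\<exists>r s. coprime r s \<and> w^2 = r^2 * s^2 \<and> (a = r^4 \<and> b = 3 * s^4 \<or> a = 3 * r^4 \<and> b = s^4)"
proof -
  have three_dvd_first: "\<exists>r s. coprime r s \<and> w^2 = r^2 * s^2 \<and> a' = 3 * r^4 \<and> b' = s^4"
    if "a' > 0" "b' > 0" "coprime a' b'" "a' * b' = 3 * w^4" "3 dvd a'" for a' b' :: int
  proof -
    obtain c where c: "a' = 3 * c" using \<open>3 dvd a'\<close> by blast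
    have "c > 0" "c * b' = w^4" "coprime c b'" using that c by auto
    then obtain r s where "c = r^4" "b' = s^4"
      using coprime_mult_eq_power_int \<open>b' > 0\<close> by (metis coprime_commute mult.commute)
    moreover have "(r^2 * s^2)^2 = (w^2)^2"
      using \<open>c * b' = w^4\<close> calculation by (simp add: power_mult_distrib flip: power_mult)
    then have "w^2 = r^2 * s^2" using power2_eq_iff_nonneg[of "r^2 * s^2" "w^2"] by simp
    ultimately show ?thesis using c \<open>coprime c b'\<close> by auto
  qed
  have "3 dvd a * b" using assms(4) by simp
  then consider "3 dvd a" | "3 dvd b" by (auto simp: prime_dvd_mult_iff)
  then show ?thesis
  proof cases
    case 1
    then show ?thesis using three_dvd_first[OF assms] by blast
  next
    case 2
    then obtain r s where "coprime r s" "w^2 = r^2 * s^2" "b = 3 * r^4" "a = s^4"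
      using three_dvd_first[of b a] assms by (auto simp: coprime_commute mult.commute)
    then show ?thesis by (intro exI[of _ s] exI[of _ r]) (auto simp: coprime_commute mult.commute)
  qed
qed

lemma quartic_Q_square_of_factors:
  fixes a b w M :: int
  assumes "a > 0" "b > 0" "a * b = 3 * w^4" "b - a = M^2 - 6 * w^2" "coprime M w" "\<not> 3 dvd M"
  shows "\<exists>r s. coprime r s \<and> w^2 = r^2 * s^2 \<and> M^2 = quartic_Q s r"
proof -
  have "coprime a b"
    by (rule coprime_if_mult_eq_3_fourth_power[of a b w M "-1" 1 2]) (use assms in auto)
  then obtain r s where rs: "coprime r s" "w^2 = r^2 * s^2"
    and "a = r^4 \<and> b = 3 * s^4 \<or> a = 3 * r^4 \<and> b = s^4"
    using coprime_factors_of_3_fourth_power assms(1-3) by blast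
  moreover have False if ab: "a = r^4" "b = 3 * s^4"
  proof -
    have "\<not> 3 dvd r"
      using \<open>coprime a b\<close> ab coprime_common_divisor[of a b 3] by (auto simp: power4_eq_xxxx)
    then have "(r^2)^2 mod 3 = 1" "M^2 mod 3 = 1"
      using assms(6) by (subst square_mod_3; simp add: prime_dvd_power_iff)+
    moreover have "M^2 + (r^2)^2 = 3 * (s^4 + 2 * r^2 * s^2)"
      using assms(4) ab rs(2) by (simp add: algebra_simps flip: power4_eq_square_square)
    ultimately show False by presburger
  qed
  ultimately have "a = 3 * r^4" "b = s^4" by auto
  then have "M^2 = quartic_Q s r"
    using assms(4) rs(2) by (simp add: quartic_Q_def algebra_simps)
  then show ?thesis using rs by (metis coprime_commute mult.commute)
qed

lemma quartic_P_square_of_factors: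
  fixes a b w M :: int
  assumes "a > 0" "b > 0" "a * b = 3 * w^4" "a + b = M^2 + 3 * w^2" "coprime M w" "\<not> 3 dvd M"
  shows "\<exists>r s. coprime r s \<and> w^2 = r^2 * s^2 \<and> M^2 = quartic_P r s"
proof -
  have "coprime a b"
    by (rule coprime_if_mult_eq_3_fourth_power[of a b w M 1 1 "-1"]) (use assms in auto)
  then obtain r s where rs: "coprime r s" "w^2 = r^2 * s^2"
    and "a = r^4 \<and> b = 3 * s^4 \<or> a = 3 * r^4 \<and> b = s^4"
    using coprime_factors_of_3_fourth_power assms(1-3) by blast
  then consider "M^2 = quartic_P r s" | "M^2 = quartic_P s r"
    using assms(4) by (auto simp: quartic_P_def algebra_simps)
  then show ?thesis using rs by cases (metis coprime_commute mult.commute)+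
qed

lemma quartic_P_square_factorization:
  fixes m n N :: int
  defines "K \<equiv> 2 * m^2 - 3 * n^2"
  assumes "N \<ge> 0" "n \<noteq> 0" "N^2 = quartic_P m n"
  shows "2 * N - K > 0" "2 * N + K > 0" "(2 * N - K) * (2 * N + K) = 3 * n^4"
proof -
  have "(2 * N)^2 - K^2 = 3 * n^4"
    using assms(4) unfolding K_def quartic_P_def by algebra
  then show fac: "(2 * N - K) * (2 * N + K) = 3 * n^4"
    by (simp add: power2_eq_square algebra_simps)
  have "0 < 3 * n^4" using assms(3) by simp
  then have "K^2 < (2 * N)^2" using \<open>(2 * N)^2 - K^2 = 3 * n^4\<close> by linarith
  then have "\<bar>K\<bar>^2 < (2 * N)^2" by simp
  then have "\<bar>K\<bar> < 2 * N" by (rule power_less_imp_less_base) (use assms(2) in simp)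
  then show "2 * N - K > 0" "2 * N + K > 0" by auto
qed

lemma quartic_Q_square_of_quartic_P_square_odd:
  fixes m n N :: int
  assumes "coprime m n" "odd n" "N \<ge> 0" "N^2 = quartic_P m n"
  shows "\<exists>r s. coprime r s \<and> n^2 = r^2 * s^2 \<and> (2 * m)^2 = quartic_Q s r"
proof -
  have "n \<noteq> 0" using assms(2) by auto
  note fac = quartic_P_square_factorization[OF assms(3) this assms(4)]
  have "2 * (2 * m^2 - 3 * n^2) = (2 * m)^2 - 6 * n^2" by (simp add: power_mult_distrib)
  then show ?thesis
    using quartic_Q_square_of_factors[OF fac, of "2 * m"] not_three_dvd_if_square_quartic_P[OF assms(1,4)]
      assms(1,2)
    by (auto simp: prime_dvd_mult_iff)
qed

lemma quartic_Q_square_of_quartic_P_square_even: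
  fixes m n N :: int
  assumes "coprime m n" "even n" "n \<noteq> 0" "N \<ge> 0" "N^2 = quartic_P m n"
  shows "\<exists>r s. coprime r s \<and> n^2 = 4 * (r^2 * s^2) \<and> m^2 = quartic_Q s r"
proof -
  define K where "K = 2 * m^2 - 3 * n^2"
  note fac = quartic_P_square_factorization[OF assms(4,3,5), folded K_def]
  obtain n' where n': "n = 2 * n'" using assms(2) by blast
  have "odd m" using assms(1,2) coprime_common_divisor[of m n 2] by auto
  then have "odd (quartic_P m n)" using assms(2) by (simp add: quartic_P_def)
  then have "odd N" unfolding assms(5)[symmetric] by simp
  then have "even (N - m^2)" "even (N + m^2)" using \<open>odd m\<close> by simp_all
  then obtain c d where cd: "N - m^2 = 2 * c" "N + m^2 = 2 * d" by (meson evenE)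
  define a b where "a = c + 3 * n'^2" and "b = d - 3 * n'^2"
  have "2 * N - K = 4 * a" "2 * N + K = 4 * b"
    using cd by (simp_all add: a_def b_def K_def n' power_mult_distrib)
  then have "a > 0" "b > 0" "16 * (a * b) = 16 * (3 * n'^4)"
    using fac by (auto simp: n' power_mult_distrib)
  moreover have "b - a = m^2 - 6 * n'^2" using cd by (simp add: a_def b_def)
  moreover have "coprime m n'" using assms(1) n' by simp
  ultimately obtain r s where "coprime r s" "n'^2 = r^2 * s^2" "m^2 = quartic_Q s r"
    using quartic_Q_square_of_factors[of a b n' m] not_three_dvd_if_square_quartic_P[OF assms(1,5)]
    by auto
  then show ?thesis using n' by (auto simp: power_mult_distrib)
qed

lemma quartic_Q_square_of_quartic_P_square:
  fixes m n N :: int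
  assumes "coprime m n" "n \<noteq> 0" "N^2 = quartic_P m n"
  shows "\<exists>r s W. coprime r s \<and> r \<noteq> 0 \<and> s \<noteq> 0 \<and> W^2 = quartic_Q r s \<and>
    r^2 * s^2 \<le> n^2 \<and> (r^2 = 1 \<and> s^2 = 1 \<longrightarrow> n^2 = 1)"
proof -
  have N: "\<bar>N\<bar> \<ge> 0" "\<bar>N\<bar>^2 = quartic_P m n" using assms(3) by simp_all
  show ?thesis
  proof (cases "even n")
    case False
    then obtain r s where "coprime r s" "n^2 = r^2 * s^2" "(2 * m)^2 = quartic_Q s r"
      using quartic_Q_square_of_quartic_P_square_odd[OF assms(1) _ N] by blast
    then show ?thesis using assms(2)
      by (intro exI[of _ s] exI[of _ r] exI[of _ "2 * m"]) (auto simp: coprime_commute mult.commute)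
  next
    case True
    then obtain r s where rs: "coprime r s" "n^2 = 4 * (r^2 * s^2)" "m^2 = quartic_Q s r"
      using quartic_Q_square_of_quartic_P_square_even[OF assms(1) _ assms(2) N] by blast
    have "odd m" using assms(1) True coprime_common_divisor[of m n 2] by auto
    moreover have "m^2 = 4" if "s^2 = 1" "r^2 = 1"
      using rs(3) that unfolding quartic_Q_def power4_eq_square_square by simp
    ultimately have "\<not> (s^2 = 1 \<and> r^2 = 1)" by (metis even_numeral even_power zero_less_numeral)
    then show ?thesis using rs assms(2)
      by (intro exI[of _ s] exI[of _ r] exI[of _ m]) (auto simp: coprime_commute mult.commute)
  qed
qed

lemma quartic_P_square_of_quartic_Q_square:
  fixes M e N :: int
  assumes "coprime M e" "e \<noteq> 0" "N^2 = quartic_Q M e"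
  shows "\<exists>r s. coprime r s \<and> e^2 = r^2 * s^2 \<and> M^2 = quartic_P r s"
proof -
  define L where "L = M^2 + 3 * e^2"
  have diff: "L^2 - \<bar>N\<bar>^2 = 12 * e^4"
    using assms(3) unfolding L_def quartic_Q_def power2_abs by algebra
  then have fac: "(L - \<bar>N\<bar>) * (L + \<bar>N\<bar>) = 12 * e^4"
    by (simp add: power2_eq_square algebra_simps)
  have "0 < 12 * e^4" using assms(2) by simp
  then have "\<bar>N\<bar>^2 < L^2" using diff by linarith
  then have "\<bar>N\<bar> < L" by (rule power_less_imp_less_base) (simp add: L_def)
  have "even (L - \<bar>N\<bar>)"
  proof (rule ccontr)
    assume "odd (L - \<bar>N\<bar>)"
    moreover have "L + \<bar>N\<bar> = (L - \<bar>N\<bar>) + 2 * \<bar>N\<bar>" by simp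
    ultimately have "odd ((L - \<bar>N\<bar>) * (L + \<bar>N\<bar>))" by simp
    then show False unfolding fac by simp
  qed
  then obtain a where a: "L - \<bar>N\<bar> = 2 * a" by blast
  define b where "b = a + \<bar>N\<bar>"
  have "a > 0" "b > 0" using a \<open>\<bar>N\<bar> < L\<close> by (auto simp: b_def)
  moreover have "4 * (a * b) = 4 * (3 * e^4)" using fac a by (simp add: b_def algebra_simps)
  moreover have "a + b = M^2 + 3 * e^2" using a by (simp add: b_def L_def)
  ultimately show ?thesis
    using quartic_P_square_of_factors not_three_dvd_if_square_quartic_Q[OF assms(1,3)] assms(1) by simp
qed

text \<open>
  One round \<open>P \<rightarrow> Q \<rightarrow> P\<close> replaces \<open>n\<close> by \<open>s'\<close> with \<open>s'^2 \<le> n^2\<close>; when the decrease is not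
  strict, \<open>r^2 = 1\<close>, and the one-variable cases above end the descent.
\<close>

lemma quartic_P_square_trivial:
  fixes m n N :: int
  assumes "coprime m n" "n \<noteq> 0" "N^2 = quartic_P m n"
  shows "m^2 = 1 \<and> n^2 = 1"
  using assms
proof (induction "nat \<bar>n\<bar>" arbitrary: m n N rule: less_induct)
  case less
  obtain r s W where rs: "coprime r s" "r \<noteq> 0" "s \<noteq> 0" "W^2 = quartic_Q r s"
      "r^2 * s^2 \<le> n^2" "r^2 = 1 \<and> s^2 = 1 \<longrightarrow> n^2 = 1"
    using quartic_Q_square_of_quartic_P_square[OF less.prems] by blast
  obtain r' s' where rs': "coprime r' s'" "s^2 = r'^2 * s'^2" "r^2 = quartic_P r' s'"
    using quartic_P_square_of_quartic_Q_square[OF rs(1,3,4)] by blast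
  have "1 \<le> r^2" "1 \<le> r'^2"
    using rs(2,3) rs'(2) square_cases[of r] square_cases[of r'] by auto
  then have "s'^2 \<le> s^2" "s^2 \<le> r^2 * s^2"
    using mult_right_mono[of 1 "r'^2" "s'^2"] mult_right_mono[of 1 "r^2" "s^2"] rs'(2) by simp_all
  have "s^2 = 1"
  proof (cases "s'^2 < n^2")
    case True
    then have "nat \<bar>s'\<bar> < nat \<bar>n\<bar>"
      by (metis abs_ge_zero nat_less_eq_zless power2_abs power_less_imp_less_base)
    then show ?thesis using less.hyps[OF _ rs'(1) _ rs'(3)] rs'(2) rs(3) by force
  next
    case False
    then have "s^2 = r^2 * s^2"
      using \<open>s'^2 \<le> s^2\<close> \<open>s^2 \<le> r^2 * s^2\<close> rs(5) by linarith
    then have "r^2 = 1" using rs(3) by simp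
    then have "W^2 = quartic_Q 1 s" using rs(4) unfolding quartic_Q_def power4_eq_square_square by simp
    then show ?thesis using square_quartic_Q_one_left rs(3) by blast
  qed
  then have "W^2 = quartic_Q r 1" using rs(4) unfolding quartic_Q_def power4_eq_square_square by simp
  then have "r^2 = 1" by (rule square_quartic_Q_one_right)
  then have "n^2 = 1" using rs(6) \<open>s^2 = 1\<close> by simp
  then have "N^2 = quartic_P m 1" using less.prems(3) unfolding quartic_P_def power4_eq_square_square by simp
  then show ?case using square_quartic_P_one_right \<open>n^2 = 1\<close> by blast
qed

section \<open>The equation \<open>(t^3 - 1)(t^3 + 1) = p^3 q^3 y^2\<close>\<close>

lemma cube_plus_one_eq_square_of_3_dvd:
  fixes k v :: int
  assumes "k > 0" "(3 * k - 1)^3 + 1 = v^2"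
  shows "k = 1"
proof -
  define D where "D = 3 * k^2 - 3 * k + 1"
  have "v^2 = 3 * (3 * (k * D))" unfolding assms(2)[symmetric] D_def by algebra
  then have "3 dvd v^2" by simp
  then have "3 dvd v" by (simp add: prime_dvd_power_iff)
  then obtain v' where "v = 3 * v'" by blast
  then have kD: "k * D = v'^2" using \<open>v^2 = 3 * (3 * (k * D))\<close> by (simp add: power_mult_distrib)
  have "coprime k D"
    using coprime_of_lincomb[of k "3 - 3 * k" D 1 1] by (simp add: D_def algebra_simps power2_eq_square)
  have "k \<le> k^2" using assms(1) by (simp add: power2_eq_square)
  then have "D > 0" by (simp add: D_def)
  then obtain a b where "k = a^2" "D = b^2"
    using coprime_mult_eq_power_int[of k D v' 2] coprime_mult_eq_power_int[of D k v' 2] kD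
      \<open>coprime k D\<close> assms(1)
    by (metis coprime_commute mult.commute)
  then have "b^2 = 3 * k^2 - 3 * k + 1" "a \<noteq> 0" using assms(1) by (auto simp: D_def)
  then have "b^2 = quartic_P 1 a" "a \<noteq> 0"
    unfolding quartic_P_def power4_eq_square_square by (simp_all add: \<open>k = a^2\<close>)
  then have "a^2 = 1" using quartic_P_square_trivial[of 1 a b] by simp
  then show ?thesis using \<open>k = a^2\<close> by simp
qed

lemma cube_plus_one_eq_square:
  fixes t v :: int
  assumes "t \<ge> 2" "t^3 + 1 = v^2"
  shows "t = 2"
proof (cases "3 dvd t + 1")
  case False
  define C where "C = t^2 - t + 1"
  have fac: "(t + 1) * C = v^2"
    using assms(2) by (simp add: C_def algebra_simps power2_eq_square power3_eq_cube)
  have "t \<le> t^2" using assms(1) by (simp add: power2_eq_square)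
  then have "C > 0" by (simp add: C_def)
  have "coprime (t + 1) 3" using False prime_imp_coprime[of 3 "t + 1"] by (simp add: coprime_commute)
  then have "coprime C (t + 1)"
    using coprime_of_lincomb[of "t + 1" "2 - t" C 1 3]
    by (simp add: C_def algebra_simps power2_eq_square coprime_commute)
  then obtain w where "C = w^2"
    using coprime_factor_square[of C "t + 1" 1 v] \<open>C > 0\<close> fac by (auto simp: mult.commute)
  then show ?thesis using square_eq_square_minus_self_plus_one[of t w] assms(1) by (simp add: C_def)
next
  case True
  then obtain k where "t + 1 = 3 * k" by blast
  then have "t = 3 * k - 1" "k > 0" using assms(1) by simp_all
  then show ?thesis using cube_plus_one_eq_square_of_3_dvd[of k v] assms(2) by simp
qed

lemma coprime_cube_minus_one_cube_plus_one:
  fixes t :: int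
  assumes "even t"
  shows "coprime (t^3 - 1) (t^3 + 1)"
  using coprime_of_lincomb[of "t^3 - 1" "-1" "t^3 + 1" 1 2] assms by simp

lemma cube_minus_one_ne_square:
  fixes t w :: int
  assumes "even t"
  shows "t^3 - 1 \<noteq> w^2"
proof
  assume "t^3 - 1 = w^2"
  moreover obtain u where "t = 2 * u" using assms by blast
  ultimately have "w^2 = 4 * (2 * u^3) - 1" by (simp add: power_mult_distrib)
  then show False using square_mod_4[of w] by presburger
qed

lemma coprime_factor_pair_square:
  fixes a b c p q y :: int
  assumes "a * b * c = p^3 * q^3 * y^2" "a > 0" "b > 0" "coprime a b" "coprime (a * b) c"
    and "prime p" "prime q" "\<not> q dvd a * b"
  shows "(\<exists>u. a = u^2) \<or> (\<exists>u. b = u^2)"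
proof -
  have q: "\<not> q dvd a" "\<not> q dvd b" using assms(8) by auto
  have "\<not> p dvd a \<or> \<not> p dvd b" using assms(4,6) coprime_common_divisor not_prime_unit by blast
  then show ?thesis
  proof
    assume "\<not> p dvd a"
    then have "\<exists>u. a = u^2"
      using coprime_factor_square_prime_cubes[of a "b * c" p q y] assms q by (simp add: mult.assoc)
    then show ?thesis ..
  next
    assume "\<not> p dvd b"
    then have "\<exists>u. b = u^2"
      using coprime_factor_square_prime_cubes[of b "a * c" p q y] assms q by (simp add: ac_simps)
    then show ?thesis ..
  qed
qed

lemma thrice_square_pair_imp_eq_1:
  fixes r a b :: int
  assumes "r^2 + 2 = 3 * a^2" "r^2 + r + 1 = 3 * b^2"
  shows "r = 1"
proof (rule ccontr)
  assume "r \<noteq> 1"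
  \<comment> \<open>then \<open>a^2 \<noteq> b^2\<close>, so \<open>(r - 1)^2 = 9 (b^2 - a^2)^2 \<ge> 9 a^2 = 3 (r^2 + 2)\<close>, impossible\<close>
  have "r - 1 = 3 * (b^2 - a^2)" using assms by simp
  then have "\<bar>b\<bar> \<noteq> \<bar>a\<bar>" using \<open>r \<noteq> 1\<close> by (metis power2_abs diff_self mult_zero_right eq_iff_diff_eq_0)
  then have "1 \<le> \<bar>\<bar>b\<bar> - \<bar>a\<bar>\<bar>" by linarith
  then have "\<bar>b\<bar> + \<bar>a\<bar> \<le> \<bar>\<bar>b\<bar> - \<bar>a\<bar>\<bar> * (\<bar>b\<bar> + \<bar>a\<bar>)"
    using mult_right_mono[of 1 _ "\<bar>b\<bar> + \<bar>a\<bar>"] by simp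
  also have "\<dots> = \<bar>(\<bar>b\<bar> - \<bar>a\<bar>) * (\<bar>b\<bar> + \<bar>a\<bar>)\<bar>" by (simp add: abs_mult)
  also have "(\<bar>b\<bar> - \<bar>a\<bar>) * (\<bar>b\<bar> + \<bar>a\<bar>) = b^2 - a^2"
    by (simp add: power2_eq_square algebra_simps abs_mult_self_eq)
  finally have "\<bar>a\<bar>^2 \<le> \<bar>b^2 - a^2\<bar>^2" by (intro power_mono) auto
  then have "a^2 \<le> (b^2 - a^2)^2" by simp
  moreover have "(r - 1)^2 = 9 * (b^2 - a^2)^2"
    using arg_cong[OF \<open>r - 1 = 3 * (b^2 - a^2)\<close>, of "\<lambda>x. x^2"] by (simp only: power_mult_distrib) simp
  ultimately have "9 * a^2 \<le> (r - 1)^2" by simp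
  then have "3 * (r^2 + 2) \<le> r^2 - 2 * r + 1" using assms(1) by (simp add: power2_eq_square algebra_simps)
  moreover have "0 \<le> (r + 1)^2 + r^2" by simp
  ultimately show False by (simp add: power2_eq_square algebra_simps)
qed

lemma cube_plus_one_factorization_at_square_plus_one:
  fixes r j :: int
  assumes r: "r = 3 * j + 1"
  defines "F \<equiv> 3 * (r^2 + 2)" and "d \<equiv> 3 * j^2 + 3 * j + 1" and "e \<equiv> r^2 - r + 1"
  shows "(r^2 + 1)^3 + 1 = F * d * e" "coprime F d" "coprime F e" "coprime d e"
    and "F > 0" "d > 0" "e > 0"
proof -
  show "(r^2 + 1)^3 + 1 = F * d * e" unfolding F_def d_def e_def r by algebra
  have "coprime d 3" "coprime e 3"
    using coprime_of_lincomb[of d 1 3 "- (j^2 + j)" 1] coprime_of_lincomb[of e 1 3 "- (3 * j^2 + j)" 1]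
    by (simp_all add: d_def e_def r algebra_simps power2_eq_square)
  moreover have "coprime d (r^2 + 2)"
    using coprime_of_lincomb[of d "- 3 * (r + 1)" "r^2 + 2" "2 + r" 3] \<open>coprime d 3\<close>
    by (simp add: d_def r algebra_simps power2_eq_square)
  moreover have "coprime e (r^2 + 2)"
    using coprime_of_lincomb[of e "r - 1" "r^2 + 2" "2 - r" 3] \<open>coprime e 3\<close>
    by (simp add: e_def algebra_simps power2_eq_square)
  ultimately show "coprime F d" "coprime F e"
    unfolding F_def coprime_mult_left_iff by (auto simp only: coprime_commute)
  have "odd e" by (simp add: e_def power2_eq_square)
  then have "coprime e (2^2)" by (simp only: coprime_power_right_iff) simp
  moreover have "e * (2 + 2 * r) + d * (3 * (2 - 2 * r)) = 2^2"
    unfolding d_def e_def r by algebra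
  ultimately show "coprime d e" using coprime_of_lincomb coprime_commute by blast
  show "F > 0" unfolding F_def by (rule mult_pos_pos) (simp_all add: add_nonneg_pos)
  have "4 * d = 3 * (2 * j + 1)^2 + 1" "2 * e = (r - 1)^2 + r^2 + 1"
    by (simp_all add: e_def d_def power2_eq_square algebra_simps)
  then show "d > 0" "e > 0"
    using zero_le_power2[of "2 * j + 1"] zero_le_power2[of "r - 1"] zero_le_power2[of r] by linarith+
qed

lemma no_solution_at_square_plus_one:
  fixes r j t p q y :: int
  assumes r: "r = 3 * j + 1" "r \<noteq> 1" and t: "t = r^2 + 1" "even t"
    and eq: "(t^3 - 1) * (t^3 + 1) = p^3 * q^3 * y^2"
    and pq: "prime p" "prime q" "\<not> p dvd t^3 + 1" "\<not> q dvd t^3 - 1"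
  shows False
proof -
  define F d e where "F = 3 * (r^2 + 2)" and "d = 3 * j^2 + 3 * j + 1" and "e = r^2 - r + 1"
  note fac = cube_plus_one_factorization_at_square_plus_one[OF r(1), folded F_def d_def e_def t(1)]
  have "coprime (t^3 - 1) (F * d * e)"
    using coprime_cube_minus_one_cube_plus_one[OF t(2)] fac(1) by simp
  then have cA: "coprime F (t^3 - 1)" "coprime d (t^3 - 1)" "coprime e (t^3 - 1)"
    by (simp_all add: coprime_commute)
  have eq': "F * ((t^3 - 1) * d * e) = p^3 * q^3 * y^2" "d * ((t^3 - 1) * F * e) = p^3 * q^3 * y^2"
    "e * ((t^3 - 1) * F * d) = p^3 * q^3 * y^2"
    using eq fac(1) by (simp_all add: ac_simps)
  have np: "\<not> p dvd F" "\<not> p dvd d" "\<not> p dvd e" using pq(3) fac(1) by (auto intro: dvd_mult2 dvd_mult)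
  have "q dvd e"
  proof (rule ccontr)
    assume "\<not> q dvd e"
    then obtain w where "e = w^2"
      using coprime_factor_square_prime_cubes[OF eq'(3) fac(7) _ pq(1,2) np(3)] cA fac
      by (auto simp: coprime_commute)
    moreover have "r \<noteq> 0" using r(1) by presburger
    ultimately show False using square_eq_square_minus_self_plus_one[of r w] r(2) by (simp add: e_def)
  qed
  then have nq: "\<not> q dvd F" "\<not> q dvd d"
    using fac pq(2) by (meson coprime_common_divisor not_prime_unit coprime_commute)+
  obtain z where "F = z^2"
    using coprime_factor_square_prime_cubes[OF eq'(1) fac(5) _ pq(1,2) np(1) nq(1)] cA fac by auto
  then have "3 dvd z^2" by (simp add: F_def flip: \<open>F = z^2\<close>)
  then have "3 dvd z" by (simp add: prime_dvd_power_iff)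
  obtain b where "d = b^2"
    using coprime_factor_square_prime_cubes[OF eq'(2) fac(6) _ pq(1,2) np(2) nq(2)] cA fac
    by (auto simp: coprime_commute)
  obtain z' where "z = 3 * z'" using \<open>3 dvd z\<close> by blast
  then have "r^2 + 2 = 3 * z'^2" using \<open>F = z^2\<close> by (simp add: F_def power_mult_distrib)
  moreover have "r^2 + r + 1 = 3 * b^2"
    using \<open>d = b^2\<close> unfolding d_def r by (simp add: algebra_simps power2_eq_square)
  ultimately show False using thrice_square_pair_imp_eq_1 r(2) by blast
qed

lemma linear_factor_of_cube_square:
  fixes t e G p q y :: int
  assumes "e = 1 \<or> e = -1" "t \<ge> 2" "(t^3 + e) * G = p^3 * q^3 * y^2" "coprime (t^3 + e) G"
    and "prime p" "prime q" "\<not> q dvd t^3 + e" "\<not> 3 dvd t + e"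
  shows "\<exists>s. t + e = s^2"
proof -
  define C where "C = t^2 - e * t + 1"
  have fac: "t^3 + e = (t + e) * C"
    using assms(1) unfolding C_def by (auto simp: algebra_simps power2_eq_square power3_eq_cube)
  have "coprime (t + e) 3" using assms(8) prime_imp_coprime[of 3 "t + e"] by (simp add: coprime_commute)
  moreover have "(t + e) * (2 * e - t) + C * 1 = 3"
    using assms(1) unfolding C_def by (auto simp: algebra_simps power2_eq_square)
  ultimately have "coprime (t + e) C" using coprime_of_lincomb by blast
  moreover have "t + e > 0" "C > 0"
    using assms(1,2) by (auto simp: C_def power2_eq_square)
  moreover have "(t + e) * C * G = p^3 * q^3 * y^2" "coprime ((t + e) * C) G" "\<not> q dvd (t + e) * C"
    using assms(3,4,7) fac by simp_all
  ultimately have "(\<exists>s. t + e = s^2) \<or> (\<exists>w. C = w^2)"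
    using coprime_factor_pair_square assms(5,6) by blast
  moreover have "C \<noteq> w^2" for w
    using square_eq_square_minus_self_plus_one[of "e * t" w] assms(1,2)
    by (auto simp: C_def power_mult_distrib)
  ultimately show ?thesis by blast
qed

lemma no_solution_split_primes:
  fixes t p q y :: int
  assumes t: "even t" "t \<ge> 4" and eq: "(t^3 - 1) * (t^3 + 1) = p^3 * q^3 * y^2"
    and pq: "prime p" "prime q" "\<not> p dvd t^3 + 1" "\<not> q dvd t^3 - 1"
  shows False
proof -
  have cop: "coprime (t^3 - 1) (t^3 + 1)" using coprime_cube_minus_one_cube_plus_one[OF t(1)] .
  have minus: "\<exists>r. t - 1 = r^2" if "\<not> 3 dvd t - 1"
    using linear_factor_of_cube_square[of "-1" t "t^3 + 1" p q y] t eq pq cop that by simp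
  have plus: "\<exists>s. t + 1 = s^2" if "\<not> 3 dvd t + 1"
    using linear_factor_of_cube_square[of 1 t "t^3 - 1" q p y] t eq pq cop that
    by (simp add: ac_simps coprime_commute)
  consider "t mod 3 = 0" | "t mod 3 = 1" | "t mod 3 = 2" by linarith
  then show False
  proof cases
    case 1
    then have "\<not> 3 dvd t - 1" "\<not> 3 dvd t + 1" by presburger+
    then obtain r s where "t - 1 = r^2" "t + 1 = s^2" using minus plus by blast
    then have "s^2 = r^2 + 2" by simp
    then show False using square_mod_4[of r] square_mod_4[of s] by presburger
  next
    case 2
    then have "\<not> 3 dvd t + 1" by presburger
    then obtain s where "t + 1 = s^2" using plus by blast
    then show False using 2 square_mod_3[of s] by (simp split: if_splits; presburger)
  next
    case 3
    then have "\<not> 3 dvd t - 1" by presburger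
    then obtain r where r: "t - 1 = r^2" using minus by blast
    then have "\<not> 3 dvd r^2" using 3 by presburger
    then have "\<not> 3 dvd r" by (simp add: prime_dvd_power_iff)
    then have "r mod 3 = 1 \<or> (- r) mod 3 = 1" by presburger
    then obtain r' where r': "t = r'^2 + 1" "r' mod 3 = 1" using r by (metis add_diff_cancel power2_minus diff_add_cancel)
    then have "r' = 3 * (r' div 3) + 1" by presburger
    moreover have "r' \<noteq> 1" using r'(1) t(2) by auto
    ultimately show False using no_solution_at_square_plus_one r'(1) t(1) eq pq by blast
  qed
qed

lemma no_solution_even:
  fixes t p q y :: int
  assumes t: "even t" "t \<ge> 4" and pq: "prime p" "prime q"
  shows "(t^3 - 1) * (t^3 + 1) \<noteq> p^3 * q^3 * y^2"
proof
  assume eq: "(t^3 - 1) * (t^3 + 1) = p^3 * q^3 * y^2"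
  have cop: "coprime (t^3 - 1) (t^3 + 1)" using coprime_cube_minus_one_cube_plus_one[OF t(1)] .
  have "t^3 - 1 > 0" "t^3 + 1 > 0" using t(2) power_mono[of 4 t 3] by auto
  have "\<not> p dvd t^3 - 1 \<or> \<not> p dvd t^3 + 1" "\<not> q dvd t^3 - 1 \<or> \<not> q dvd t^3 + 1"
    using cop pq coprime_common_divisor not_prime_unit by blast+
  then consider "\<not> p dvd t^3 + 1" "\<not> q dvd t^3 + 1" | "\<not> p dvd t^3 - 1" "\<not> q dvd t^3 - 1"
    | "\<not> p dvd t^3 + 1" "\<not> q dvd t^3 - 1" | "\<not> p dvd t^3 - 1" "\<not> q dvd t^3 + 1" by blast
  then show False
  proof cases
    case 1
    have "(t^3 + 1) * (t^3 - 1) = p^3 * q^3 * y^2" using eq by (simp add: mult.commute)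
    then obtain v where "t^3 + 1 = v^2"
      using coprime_factor_square_prime_cubes \<open>t^3 + 1 > 0\<close> cop pq 1 by (metis coprime_commute)
    then show False using cube_plus_one_eq_square[of t v] t(2) by simp
  next
    case 2
    then obtain w where "t^3 - 1 = w^2"
      using coprime_factor_square_prime_cubes[OF eq \<open>t^3 - 1 > 0\<close> cop pq] by blast
    then show False using cube_minus_one_ne_square t(1) by blast
  next
    case 3
    then show False using no_solution_split_primes t eq pq by blast
  next
    case 4
    then show False using no_solution_split_primes[of t q p y] t eq pq by (simp add: mult.commute)
  qed
qed

lemma prime_cubes_mult_square_ge_64:
  fixes p q y :: int
  assumes "prime p" "prime q" "y \<noteq> 0"
  shows "64 \<le> p^3 * q^3 * y^2"
proof -
  have "2^3 \<le> p^3" "2^3 \<le> q^3"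
    using power_mono[OF prime_ge_2_int[OF assms(1)], of 3] power_mono[OF prime_ge_2_int[OF assms(2)], of 3]
    by simp_all
  then have "8 * 8 \<le> p^3 * q^3" using mult_mono[of 8 "p^3" 8 "q^3"] prime_ge_0_int[OF assms(1)] by simp
  moreover have "1 \<le> y^2" using assms(3) square_cases[of y] by auto
  ultimately show ?thesis using mult_mono[of 64 "p^3 * q^3" 1 "y^2"] by simp
qed

theorem corollary1:
  shows "\<not> (\<exists>x y p q :: int. prime p \<and> prime q \<and> 64 * x ^ 6 - 1 = p ^ 3 * q ^ 3 * y ^ 2)"
proof
  assume "\<exists>x y p q :: int. prime p \<and> prime q \<and> 64 * x ^ 6 - 1 = p ^ 3 * q ^ 3 * y ^ 2"
  then obtain x y p q :: int
    where pq: "prime p" "prime q" and eq: "64 * x ^ 6 - 1 = p ^ 3 * q ^ 3 * y ^ 2" by blast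
  consider "x = 0" | "x = 1 \<or> x = -1" | "\<bar>x\<bar> \<ge> 2" by linarith
  then show False
  proof cases
    case 1
    have "0 \<le> p^3 * q^3 * y^2" using prime_ge_0_int[OF pq(1)] prime_ge_0_int[OF pq(2)] by simp
    then show False using eq 1 by simp
  next
    case 2
    then have "p^3 * q^3 * y^2 = 63" using eq by auto
    moreover from this have "y \<noteq> 0" by auto
    ultimately show False using prime_cubes_mult_square_ge_64[OF pq, of y] by simp
  next
    case 3
    define t where "t = 2 * \<bar>x\<bar>"
    have "(t^3 - 1) * (t^3 + 1) = 64 * \<bar>x\<bar>^6 - 1" unfolding t_def by algebra
    also have "\<bar>x\<bar>^6 = x^6" by (rule power_even_abs) simp
    finally show False using no_solution_even[of t p q y] pq eq 3 by (simp add: t_def)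
  qed
qed

end
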